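(* Let $(S,d)$ be a metric space with at least two points. If $f\in\operatorname{ext}(B^S_{\mathrm{FM}})$, then $\|f\|_\infty=1$. If $f\in\operatorname{ext}_*(B^S_{\mathrm{FM}})$, then also $|f|_L=1$.
   Context: $\mathrm{BL}(S)$ is the space of bounded real-valued Lipschitz functions on $S$, $|f|_L=\sup_{x\neq y}|f(x)-f(y)|/d(x,y)$, $\|f\|_{\mathrm{FM}}=\max(\|f\|_\infty,|f|_L)$, $B^S_{\mathrm{FM}}=\{f\in\mathrm{BL}(S):\|f\|_{\mathrm{FM}}\le1\}$, $\operatorname{ext}$ denotes extreme points, and $\operatorname{ext}_*(B^S_{\mathrm{FM}})=\operatorname{ext}(B^S_{\mathrm{FM}})\setminus\{f\in B^S_{\mathrm{FM}}:|f|=\mathbf{1}\}$. *)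

theory Defs
  imports "HOL-Analysis.Analysis"
begin

definition BL :: "('a::metric_space \<Rightarrow> real) set" where
  "BL = {f. bounded (range f) \<and> (\<exists>C::real. lipschitz_on C UNIV f)}"

definition sup_norm :: "('a \<Rightarrow> real) \<Rightarrow> real" where
  "sup_norm f = (SUP x. \<bar>f x\<bar>)"

definition lip_const :: "('a::metric_space \<Rightarrow> real) \<Rightarrow> real" where
  "lip_const f = (SUP p \<in> {(x, y). x \<noteq> y}. \<bar>f (fst p) - f (snd p)\<bar> / dist (fst p) (snd p))"

definition fm_norm :: "('a::metric_space \<Rightarrow> real) \<Rightarrow> real" where
  "fm_norm f = max (sup_norm f) (lip_const f)"

definition B_FM :: "('a::metric_space \<Rightarrow> real) set" where
  "B_FM = {f \<in> BL. fm_norm f \<le> 1}"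

definition ext :: "('a \<Rightarrow> real) set \<Rightarrow> ('a \<Rightarrow> real) set" where
  "ext K = {f \<in> K. \<not> (\<exists>g\<in>K. \<exists>h\<in>K. \<exists>t::real. 0 < t \<and> t < 1 \<and> g \<noteq> h \<and>
                         f = (\<lambda>x. t * g x + (1 - t) * h x))}"

definition ext_star :: "('a::metric_space \<Rightarrow> real) set" where
  "ext_star = ext B_FM - {f \<in> B_FM. \<forall>x. \<bar>f x\<bar> = 1}"

end

theory Submission
  imports Defs
begin

text \<open>An extreme point f of the unit ball admits no perturbation u with f + u and f - u both
  in the ball, except u = 0. If sup_norm f < 1, the constant 1 - sup_norm f is such a
  perturbation. If |f x0| < 1 and lip_const f < 1, then so is the tent function
  (1 - lip_const f) * max 0 (d - dist x x0) with d = 1 - |f x0|: the slack in the Lipschitz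
  constant pays for its slope, and near x0 the slack in the sup norm pays for its height.\<close>

lemma ext_midpoint_eq:
  assumes "f \<in> ext K" "g \<in> K" "h \<in> K" "f = (\<lambda>x. (g x + h x) / 2)"
  shows "g = h"
proof (rule ccontr)
  assume "g \<noteq> h"
  moreover have "f = (\<lambda>x. 1/2 * g x + (1 - 1/2) * h x)"
    using assms(4) by (simp add: fun_eq_iff field_simps)
  ultimately have "\<exists>g\<in>K. \<exists>h\<in>K. \<exists>t::real. 0 < t \<and> t < 1 \<and> g \<noteq> h \<and>
                    f = (\<lambda>x. t * g x + (1 - t) * h x)"
    using assms(2,3) by (intro bexI[of _ g] bexI[of _ h] exI[of _ "1/2"]) auto
  then show False using assms(1) unfolding ext_def by blast
qed

lemma abs_le_sup_norm:
  assumes "bounded (range f)"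
  shows "\<bar>f x\<bar> \<le> sup_norm f"
proof -
  from assms obtain B where "\<forall>y\<in>range f. norm y \<le> B" by (auto simp: bounded_iff)
  then have "bdd_above (range (\<lambda>x. \<bar>f x\<bar>))" by (auto intro!: bdd_aboveI2)
  then show ?thesis unfolding sup_norm_def by (rule cSUP_upper[OF UNIV_I])
qed

lemma abs_diff_le_lip_const:
  assumes "f \<in> BL"
  shows "\<bar>f x - f y\<bar> \<le> lip_const f * dist x y"
proof (cases "x = y")
  case False
  from assms obtain C where C: "lipschitz_on C UNIV f" unfolding BL_def by auto
  let ?q = "\<lambda>p. \<bar>f (fst p) - f (snd p)\<bar> / dist (fst p) (snd p)"
  have bdd: "bdd_above (?q ` {(x, y). x \<noteq> y})"
  proof (rule bdd_aboveI2)
    fix p :: "'a \<times> 'a" assume "p \<in> {(x, y). x \<noteq> y}"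
    then show "?q p \<le> C"
      using lipschitz_onD[OF C, of "fst p" "snd p"] by (auto simp: dist_real_def divide_le_eq)
  qed
  then have "?q (x, y) \<le> lip_const f"
    unfolding lip_const_def using cSUP_upper[OF _ bdd, of "(x, y)"] False by auto
  then show ?thesis using False by (simp add: divide_le_eq)
qed simp

lemma lip_const_nonneg:
  fixes f :: "'a::metric_space \<Rightarrow> real" and x y :: 'a
  assumes "f \<in> BL" "x \<noteq> y"
  shows "0 \<le> lip_const f"
proof -
  have "0 \<le> lip_const f * dist x y"
    using abs_diff_le_lip_const[OF assms(1), of x y] by linarith
  then show ?thesis using assms(2) by (simp add: zero_le_mult_iff)
qed

lemma B_FM_D:
  assumes "f \<in> B_FM"
  shows "\<bar>f x\<bar> \<le> sup_norm f" "sup_norm f \<le> 1"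
    and "\<bar>f x - f y\<bar> \<le> lip_const f * dist x y" "lip_const f \<le> 1"
proof -
  from assms have f: "f \<in> BL" and "fm_norm f \<le> 1" unfolding B_FM_def by auto
  then show "sup_norm f \<le> 1" "lip_const f \<le> 1" unfolding fm_norm_def by auto
  show "\<bar>f x\<bar> \<le> sup_norm f"
    using f unfolding BL_def by (blast intro: abs_le_sup_norm)
  show "\<bar>f x - f y\<bar> \<le> lip_const f * dist x y"
    using f by (rule abs_diff_le_lip_const)
qed

lemma B_FM_I:
  fixes g :: "'a::metric_space \<Rightarrow> real"
  assumes "\<exists>x y::'a. x \<noteq> y"
    and "\<And>x. \<bar>g x\<bar> \<le> 1" and "\<And>x y. \<bar>g x - g y\<bar> \<le> dist x y"
  shows "g \<in> B_FM"
proof -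
  have "lipschitz_on 1 UNIV g"
    by (rule lipschitz_onI) (use assms(3) in \<open>simp_all add: dist_real_def\<close>)
  moreover have "bounded (range g)" using assms(2) by (auto simp: bounded_iff)
  moreover have "sup_norm g \<le> 1"
    unfolding sup_norm_def by (rule cSUP_least) (simp_all add: assms(2))
  moreover have "lip_const g \<le> 1"
    unfolding lip_const_def
  proof (rule cSUP_least)
    show "{(x, y). x \<noteq> (y::'a)} \<noteq> {}" using assms(1) by auto
    fix p :: "'a \<times> 'a" assume "p \<in> {(x, y). x \<noteq> y}"
    then show "\<bar>g (fst p) - g (snd p)\<bar> / dist (fst p) (snd p) \<le> 1"
      using assms(3)[of "fst p" "snd p"] by (auto simp: divide_le_eq)
  qed
  ultimately show ?thesis unfolding B_FM_def BL_def fm_norm_def by auto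
qed

lemma ext_B_FM_perturbation_eq_0:
  fixes f u :: "'a::metric_space \<Rightarrow> real"
  assumes "\<exists>x y::'a. x \<noteq> y" "f \<in> ext B_FM"
    and "\<And>x. \<bar>f x\<bar> + \<bar>u x\<bar> \<le> 1"
    and "\<And>x y. \<bar>f x - f y\<bar> + \<bar>u x - u y\<bar> \<le> dist x y"
  shows "u = (\<lambda>x. 0)"
proof -
  have in_ball: "(\<lambda>x. f x + s * u x) \<in> B_FM" if "\<bar>s\<bar> = 1" for s :: real
  proof (rule B_FM_I[OF assms(1)])
    fix x y
    have "\<bar>f x + s * u x\<bar> \<le> \<bar>f x\<bar> + \<bar>u x\<bar>"
      using abs_triangle_ineq[of "f x" "s * u x"] that by (simp add: abs_mult)
    then show "\<bar>f x + s * u x\<bar> \<le> 1"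
      using assms(3)[of x] by linarith
    have "\<bar>(f x - f y) + s * (u x - u y)\<bar> \<le> \<bar>f x - f y\<bar> + \<bar>u x - u y\<bar>"
      using abs_triangle_ineq[of "f x - f y" "s * (u x - u y)"] that by (simp add: abs_mult)
    then show "\<bar>f x + s * u x - (f y + s * u y)\<bar> \<le> dist x y"
      using assms(4)[of x y] by (simp add: algebra_simps)
  qed
  have "(\<lambda>x. f x + 1 * u x) = (\<lambda>x. f x + (-1) * u x)"
    by (rule ext_midpoint_eq[OF assms(2) in_ball in_ball]) (simp_all add: fun_eq_iff)
  then show ?thesis by (simp add: fun_eq_iff)
qed

lemma ext_B_FM_sup_norm_eq_1:
  fixes f :: "'a::metric_space \<Rightarrow> real"
  assumes "\<exists>x y::'a. x \<noteq> y" "f \<in> ext B_FM"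
  shows "sup_norm f = 1"
proof -
  have f: "f \<in> B_FM" using assms(2) unfolding ext_def by auto
  note bounds = B_FM_D[OF f]
  have "(\<lambda>_::'a. 1 - sup_norm f) = (\<lambda>_. 0)"
  proof (rule ext_B_FM_perturbation_eq_0[OF assms])
    fix x y
    show "\<bar>f x\<bar> + \<bar>1 - sup_norm f\<bar> \<le> 1"
      using bounds(1)[of x] bounds(2) by linarith
    have "lip_const f * dist x y \<le> dist x y"
      using mult_right_mono[OF bounds(4) zero_le_dist] by simp
    then show "\<bar>f x - f y\<bar> + \<bar>(1 - sup_norm f) - (1 - sup_norm f)\<bar> \<le> dist x y"
      using bounds(3)[of x y] by linarith
  qed
  then show ?thesis by (simp add: fun_eq_iff)
qed

lemma abs_tent_diff_le_dist:
  "\<bar>max 0 (d - dist x x\<^sub>0) - max 0 (d - dist y x\<^sub>0)\<bar> \<le> dist x y"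
proof -
  have "\<bar>dist x x\<^sub>0 - dist y x\<^sub>0\<bar> \<le> dist x y"
    using dist_triangle[of x x\<^sub>0 y] dist_triangle[of y x\<^sub>0 x] by (simp add: abs_le_iff dist_commute)
  then show ?thesis by (auto simp: max_def abs_le_iff)
qed

lemma ext_B_FM_lip_const_eq_1:
  fixes f :: "'a::metric_space \<Rightarrow> real"
  assumes two: "\<exists>x y::'a. x \<noteq> y" and ext: "f \<in> ext B_FM" and "\<bar>f x\<^sub>0\<bar> \<noteq> 1"
  shows "lip_const f = 1"
proof -
  have f: "f \<in> B_FM" using ext unfolding ext_def by auto
  note bounds = B_FM_D[OF f]
  define L where "L = lip_const f"
  define d where "d = 1 - \<bar>f x\<^sub>0\<bar>"
  define tent where "tent x = max 0 (d - dist x x\<^sub>0)" for x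
  obtain a b :: 'a where "a \<noteq> b" using two by blast
  then have L: "0 \<le> L" "L \<le> 1"
    using lip_const_nonneg f bounds(4) unfolding B_FM_def L_def by auto
  have d: "0 < d" using assms(3) bounds(1)[of x\<^sub>0] bounds(2) unfolding d_def by auto
  have "(\<lambda>x. (1 - L) * tent x) = (\<lambda>x. 0)"
  proof (rule ext_B_FM_perturbation_eq_0[OF two ext])
    fix x y
    have "\<bar>f x\<bar> + (1 - L) * tent x \<le> 1"
    proof (cases "dist x x\<^sub>0 \<le> d")
      case True
      have "\<bar>f x\<bar> \<le> \<bar>f x\<^sub>0\<bar> + L * dist x x\<^sub>0"
        using bounds(3)[of x x\<^sub>0] unfolding L_def by linarith
      moreover have "L * dist x x\<^sub>0 \<le> dist x x\<^sub>0"
        using L by (simp add: mult_left_le_one_le)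
      moreover have "(1 - L) * tent x \<le> d - dist x x\<^sub>0"
        using True L unfolding tent_def by (simp add: mult_left_le_one_le)
      ultimately show ?thesis unfolding d_def by linarith
    qed (use bounds(1)[of x] bounds(2) in \<open>simp add: tent_def\<close>)
    then show "\<bar>f x\<bar> + \<bar>(1 - L) * tent x\<bar> \<le> 1"
      using L by (simp add: abs_mult tent_def)
    have "\<bar>(1 - L) * tent x - (1 - L) * tent y\<bar> = (1 - L) * \<bar>tent x - tent y\<bar>"
      using L by (simp add: abs_mult flip: right_diff_distrib)
    also have "\<dots> \<le> (1 - L) * dist x y"
      using L abs_tent_diff_le_dist unfolding tent_def by (intro mult_left_mono) auto
    moreover have "L * dist x y + (1 - L) * dist x y = dist x y"
      by (simp add: algebra_simps)
    ultimately show "\<bar>f x - f y\<bar> + \<bar>(1 - L) * tent x - (1 - L) * tent y\<bar> \<le> dist x y"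
      using bounds(3)[of x y] unfolding L_def by linarith
  qed
  then have "(1 - L) * tent x\<^sub>0 = 0" by (rule fun_cong)
  moreover have "tent x\<^sub>0 = d" using d by (simp add: tent_def)
  ultimately show ?thesis using d unfolding L_def by simp
qed

theorem lemma3p2:
  fixes f :: "'a::metric_space \<Rightarrow> real"
  assumes "\<exists>x y::'a. x \<noteq> y"
  shows "(f \<in> ext B_FM \<longrightarrow> sup_norm f = 1) \<and>
         (f \<in> ext_star \<longrightarrow> sup_norm f = 1 \<and> lip_const f = 1)"
proof (intro conjI impI)
  show "sup_norm f = 1" if "f \<in> ext B_FM"
    using ext_B_FM_sup_norm_eq_1[OF assms that] .
  assume "f \<in> ext_star"
  then obtain x\<^sub>0 where ext: "f \<in> ext B_FM" and "\<bar>f x\<^sub>0\<bar> \<noteq> 1"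
    unfolding ext_star_def ext_def by auto
  then show "sup_norm f = 1" "lip_const f = 1"
    using ext_B_FM_sup_norm_eq_1[OF assms] ext_B_FM_lip_const_eq_1[OF assms] by blast+
qed

end
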